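(* Let $h\in\mathcal{C}^\infty(\mathbb{R},\mathbb{R})$ and $\alpha\in\mathbb{R}$. Let $\phi,F\in\mathcal{C}^\infty(\mathbb{R}^3,\mathbb{R})$ be functions of $(t,x,y)$, and set $\psi=(\psi_1,\psi_2)=0$. Assume that \[ \cos\alpha\,\frac{\partial\phi}{\partial t}+\cos\alpha\,\frac{\partial\phi}{\partial x}+\sin\alpha\,\frac{\partial\phi}{\partial y}=\sin\alpha\,F,\qquad \sin\alpha\,\frac{\partial\phi}{\partial t}-\sin\alpha\,\frac{\partial\phi}{\partial x}+\cos\alpha\,\frac{\partial\phi}{\partial y}=-\cos\alpha\,F, \] and $F+h'(\phi)=0$ (these are the component form of the conditions $(\cos\alpha\,\tau_1+\sin\alpha\,\tau_2)\Phi=0$, $\psi=0$, $F+h'(\phi)=0$ for the superfield $\Phi=\phi+\theta^1\psi_1+\theta^2\psi_2+\theta^1\theta^2F$ on $\mathbb{R}^{3|2}$). Then $(\phi,\psi,F)$ solves the Euler--Lagrange system \[ \square\phi+h''(\phi)h'(\phi)+h'''(\phi)\psi_1\psi_2=0,\qquad \mathcal{D}\psi-h''(\phi)\psi=0,\qquad F+h'(\phi)=0; \] in particular $\square\phi+h''(\phi)h'(\phi)=0$.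
   Context: $\square:=\frac{\partial^2}{\partial t^2}-\frac{\partial^2}{\partial x^2}-\frac{\partial^2}{\partial y^2}$. On $\mathbb{R}^{3|2}$ with even coordinates $t,x,y$ and odd coordinates $\theta^1,\theta^2$, $\tau_1=\partial_{\theta^1}+\theta^1(\partial_t+\partial_x)+\theta^2\partial_y$ and $\tau_2=\partial_{\theta^2}+\theta^1\partial_y+\theta^2(\partial_t-\partial_x)$. With $\partial_{11}=\partial_t+\partial_x$, $\partial_{22}=\partial_t-\partial_x$, $\partial_{12}=\partial_{21}=\partial_y$, the operator $\mathcal{D}$ acts on pairs $\psi=(\psi_1,\psi_2)$ by $(\mathcal{D}\psi)_1=\partial_{12}\psi_1-\partial_{11}\psi_2$, $(\mathcal{D}\psi)_2=\partial_{22}\psi_1-\partial_{12}\psi_2$. The Euler--Lagrange system above is that of the action $\int d^3x\,d^2\theta\,(\tfrac14\epsilon^{ab}D_a\Phi D_b\Phi+\Phi^*h)$. *)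

theory Defs
  imports "HOL-Analysis.Analysis"
begin

definition pd_t :: "(real \<Rightarrow> real \<Rightarrow> real \<Rightarrow> real) \<Rightarrow> real \<Rightarrow> real \<Rightarrow> real \<Rightarrow> real" where
  "pd_t f = (\<lambda>t x y. deriv (\<lambda>s. f s x y) t)"

definition pd_x :: "(real \<Rightarrow> real \<Rightarrow> real \<Rightarrow> real) \<Rightarrow> real \<Rightarrow> real \<Rightarrow> real \<Rightarrow> real" where
  "pd_x f = (\<lambda>t x y. deriv (\<lambda>s. f t s y) x)"

definition pd_y :: "(real \<Rightarrow> real \<Rightarrow> real \<Rightarrow> real) \<Rightarrow> real \<Rightarrow> real \<Rightarrow> real \<Rightarrow> real" where
  "pd_y f = (\<lambda>t x y. deriv (\<lambda>s. f t x s) y)"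

coinductive smooth1 :: "(real \<Rightarrow> real) \<Rightarrow> bool" where
  "(\<forall>z. h differentiable at z) \<Longrightarrow> smooth1 (deriv h) \<Longrightarrow> smooth1 h"

coinductive smooth3 :: "(real \<Rightarrow> real \<Rightarrow> real \<Rightarrow> real) \<Rightarrow> bool" where
  "(\<forall>t x y. (\<lambda>(a, b, c). f a b c) differentiable at (t, x, y))
   \<Longrightarrow> smooth3 (pd_t f) \<Longrightarrow> smooth3 (pd_x f) \<Longrightarrow> smooth3 (pd_y f) \<Longrightarrow> smooth3 f"

definition wave_box :: "(real \<Rightarrow> real \<Rightarrow> real \<Rightarrow> real) \<Rightarrow> real \<Rightarrow> real \<Rightarrow> real \<Rightarrow> real" where
  "wave_box f = (\<lambda>t x y. pd_t (pd_t f) t x y - pd_x (pd_x f) t x y - pd_y (pd_y f) t x y)"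

text \<open>The operator D on pairs (psi1, psi2), with d11 = d_t + d_x, d22 = d_t - d_x,
  d12 = d21 = d_y.\<close>
definition Dop1 :: "(real \<Rightarrow> real \<Rightarrow> real \<Rightarrow> real) \<Rightarrow> (real \<Rightarrow> real \<Rightarrow> real \<Rightarrow> real) \<Rightarrow> real \<Rightarrow> real \<Rightarrow> real \<Rightarrow> real" where
  "Dop1 \<psi>1 \<psi>2 = (\<lambda>t x y. pd_y \<psi>1 t x y - (pd_t \<psi>2 t x y + pd_x \<psi>2 t x y))"

definition Dop2 :: "(real \<Rightarrow> real \<Rightarrow> real \<Rightarrow> real) \<Rightarrow> (real \<Rightarrow> real \<Rightarrow> real \<Rightarrow> real) \<Rightarrow> real \<Rightarrow> real \<Rightarrow> real \<Rightarrow> real" where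
  "Dop2 \<psi>1 \<psi>2 = (\<lambda>t x y. (pd_t \<psi>1 t x y - pd_x \<psi>1 t x y) - pd_y \<psi>2 t x y)"

definition EL_system :: "(real \<Rightarrow> real) \<Rightarrow> (real \<Rightarrow> real \<Rightarrow> real \<Rightarrow> real) \<Rightarrow>
    (real \<Rightarrow> real \<Rightarrow> real \<Rightarrow> real) \<Rightarrow> (real \<Rightarrow> real \<Rightarrow> real \<Rightarrow> real) \<Rightarrow>
    (real \<Rightarrow> real \<Rightarrow> real \<Rightarrow> real) \<Rightarrow> bool" where
  "EL_system h \<phi> \<psi>1 \<psi>2 F \<longleftrightarrow>
     (\<forall>t x y. wave_box \<phi> t x y + deriv (deriv h) (\<phi> t x y) * deriv h (\<phi> t x y)
        + deriv (deriv (deriv h)) (\<phi> t x y) * \<psi>1 t x y * \<psi>2 t x y = 0) \<and>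
     (\<forall>t x y. Dop1 \<psi>1 \<psi>2 t x y - deriv (deriv h) (\<phi> t x y) * \<psi>1 t x y = 0) \<and>
     (\<forall>t x y. Dop2 \<psi>1 \<psi>2 t x y - deriv (deriv h) (\<phi> t x y) * \<psi>2 t x y = 0) \<and>
     (\<forall>t x y. F t x y + deriv h (\<phi> t x y) = 0)"

end

theory Submission
  imports Defs
begin

text \<open>Write \<open>c = cos \<alpha>\<close>, \<open>s = sin \<alpha>\<close> and \<open>M\<close> for the symmetric matrix of first-order
  operators \<open>\<partial>\<^sub>a\<^sub>b\<close>. The constraints say \<open>M (c, s) \<phi> = (s F, -c F)\<close>. Because mixed partials
  commute, \<open>adj M \<cdot> M = \<box>\<close>, so applying \<open>adj M\<close> to the constraints expresses \<open>c \<box>\<phi>\<close> and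
  \<open>s \<box>\<phi>\<close> through the first derivatives of \<open>F\<close>. Since \<open>F = W(\<phi>)\<close> with \<open>W = -h'\<close>, the chain
  rule turns these back into the constraints, giving \<open>c \<box>\<phi> = -c W'(\<phi>) F\<close> and
  \<open>s \<box>\<phi> = -s W'(\<phi>) F\<close>, hence \<open>\<box>\<phi> = -h''(\<phi>) h'(\<phi>)\<close> as \<open>c\<^sup>2 + s\<^sup>2 = 1\<close>.\<close>

text \<open>Both sides are the second difference of \<open>g\<close> over the square
  \<open>[a, a + e] \<times> [b, b + e]\<close>, divided by \<open>e\<^sup>2\<close> and evaluated by the mean value theorem in the
  two possible orders.\<close>
lemma second_difference_mean_value:
  fixes g g1 g2 g12 g21 :: "real \<Rightarrow> real \<Rightarrow> real"
  assumes d1: "\<And>u v. ((\<lambda>u. g u v) has_real_derivative g1 u v) (at u)"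
    and d2: "\<And>u v. ((\<lambda>v. g u v) has_real_derivative g2 u v) (at v)"
    and d12: "\<And>u v. ((\<lambda>v. g1 u v) has_real_derivative g12 u v) (at v)"
    and d21: "\<And>u v. ((\<lambda>u. g2 u v) has_real_derivative g21 u v) (at u)"
    and e: "e > 0"
  obtains \<xi> \<eta> \<xi>' \<eta>' where "a < \<xi>" "\<xi> < a + e" "b < \<eta>" "\<eta> < b + e"
    "a < \<xi>'" "\<xi>' < a + e" "b < \<eta>'" "\<eta>' < b + e" "g12 \<xi> \<eta> = g21 \<xi>' \<eta>'"
proof -
  obtain \<xi> where \<xi>: "a < \<xi>" "\<xi> < a + e"
    "(g (a+e) (b+e) - g (a+e) b) - (g a (b+e) - g a b) = e * (g1 \<xi> (b+e) - g1 \<xi> b)"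
    using MVT2[of a "a+e" "\<lambda>u. g u (b+e) - g u b" "\<lambda>u. g1 u (b+e) - g1 u b",
        OF _ DERIV_diff[OF d1 d1]] e by auto
  obtain \<eta> where \<eta>: "b < \<eta>" "\<eta> < b + e" "g1 \<xi> (b+e) - g1 \<xi> b = e * g12 \<xi> \<eta>"
    using MVT2[of b "b+e" "\<lambda>v. g1 \<xi> v" "\<lambda>v. g12 \<xi> v"] e d12 by auto
  obtain \<eta>' where \<eta>': "b < \<eta>'" "\<eta>' < b + e"
    "(g (a+e) (b+e) - g a (b+e)) - (g (a+e) b - g a b) = e * (g2 (a+e) \<eta>' - g2 a \<eta>')"
    using MVT2[of b "b+e" "\<lambda>v. g (a+e) v - g a v" "\<lambda>v. g2 (a+e) v - g2 a v",
        OF _ DERIV_diff[OF d2 d2]] e by auto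
  obtain \<xi>' where \<xi>': "a < \<xi>'" "\<xi>' < a + e" "g2 (a+e) \<eta>' - g2 a \<eta>' = e * g21 \<xi>' \<eta>'"
    using MVT2[of a "a+e" "\<lambda>u. g2 u \<eta>'" "\<lambda>u. g21 u \<eta>'"] e d21 by auto
  have "e * (e * g12 \<xi> \<eta>) = e * (e * g21 \<xi>' \<eta>')"
    using \<xi>(3) \<eta>(3) \<eta>'(3) \<xi>'(3) by (simp add: algebra_simps)
  with e have "g12 \<xi> \<eta> = g21 \<xi>' \<eta>'" by simp
  with \<xi> \<eta> \<eta>' \<xi>' show ?thesis by (intro that)
qed

lemma mixed_partials_commute:
  fixes g g1 g2 g12 g21 :: "real \<Rightarrow> real \<Rightarrow> real"
  assumes d1: "\<And>u v. ((\<lambda>u. g u v) has_real_derivative g1 u v) (at u)"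
    and d2: "\<And>u v. ((\<lambda>v. g u v) has_real_derivative g2 u v) (at v)"
    and d12: "\<And>u v. ((\<lambda>v. g1 u v) has_real_derivative g12 u v) (at v)"
    and d21: "\<And>u v. ((\<lambda>u. g2 u v) has_real_derivative g21 u v) (at u)"
    and c12: "isCont (\<lambda>p. g12 (fst p) (snd p)) (a, b)"
    and c21: "isCont (\<lambda>p. g21 (fst p) (snd p)) (a, b)"
  shows "g12 a b = g21 a b"
proof (rule ccontr)
  assume "g12 a b \<noteq> g21 a b"
  define \<epsilon> where "\<epsilon> = \<bar>g12 a b - g21 a b\<bar> / 2"
  have "\<epsilon> > 0" using \<open>g12 a b \<noteq> g21 a b\<close> by (simp add: \<epsilon>_def)
  obtain \<delta>1 where "\<delta>1 > 0"
    and \<delta>1: "\<And>p. dist p (a, b) < \<delta>1 \<Longrightarrow> \<bar>g12 (fst p) (snd p) - g12 a b\<bar> < \<epsilon>"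
    using c12 \<open>\<epsilon> > 0\<close> unfolding continuous_at_eps_delta dist_real_def by fastforce
  obtain \<delta>2 where "\<delta>2 > 0"
    and \<delta>2: "\<And>p. dist p (a, b) < \<delta>2 \<Longrightarrow> \<bar>g21 (fst p) (snd p) - g21 a b\<bar> < \<epsilon>"
    using c21 \<open>\<epsilon> > 0\<close> unfolding continuous_at_eps_delta dist_real_def by fastforce
  define e where "e = min \<delta>1 \<delta>2 / 2"
  have "e > 0" using \<open>\<delta>1 > 0\<close> \<open>\<delta>2 > 0\<close> by (simp add: e_def)
  have near: "dist (u, v) (a, b) < min \<delta>1 \<delta>2"
    if "a < u" "u < a + e" "b < v" "v < b + e" for u v
  proof -
    have "dist (u, v) (a, b) \<le> \<bar>u - a\<bar> + \<bar>v - b\<bar>"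
      using sqrt_sum_squares_le_sum_abs[of "\<bar>u - a\<bar>" "\<bar>v - b\<bar>"]
      by (simp add: dist_Pair_Pair dist_real_def)
    also have "\<dots> < 2 * e" using that by simp
    finally show ?thesis by (simp add: e_def)
  qed
  obtain \<xi> \<eta> \<xi>' \<eta>' where "a < \<xi>" "\<xi> < a + e" "b < \<eta>" "\<eta> < b + e"
    "a < \<xi>'" "\<xi>' < a + e" "b < \<eta>'" "\<eta>' < b + e" and eq: "g12 \<xi> \<eta> = g21 \<xi>' \<eta>'"
    using second_difference_mean_value[OF d1 d2 d12 d21 \<open>e > 0\<close>] by blast
  then have "\<bar>g12 \<xi> \<eta> - g12 a b\<bar> < \<epsilon>" "\<bar>g21 \<xi>' \<eta>' - g21 a b\<bar> < \<epsilon>"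
    using \<delta>1[of "(\<xi>, \<eta>)"] \<delta>2[of "(\<xi>', \<eta>')"] near by auto
  with eq show False by (simp add: \<epsilon>_def abs_if split: if_splits)
qed

lemma smooth3_differentiable:
  "smooth3 f \<Longrightarrow> (\<lambda>(a, b, c). f a b c) differentiable at (t, x, y)"
  by (auto elim: smooth3.cases)

lemma smooth3_pd:
  assumes "smooth3 f"
  shows "smooth3 (pd_t f)" "smooth3 (pd_x f)" "smooth3 (pd_y f)"
  using assms by (auto elim: smooth3.cases)

lemma smooth3_has_real_derivative_pd:
  assumes "smooth3 f"
  shows "((\<lambda>s. f s x y) has_real_derivative pd_t f t x y) (at t)"
    and "((\<lambda>s. f t s y) has_real_derivative pd_x f t x y) (at x)"
    and "((\<lambda>s. f t x s) has_real_derivative pd_y f t x y) (at y)"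
proof -
  have "((\<lambda>(a, b, c). f a b c) \<circ> (\<lambda>s. (s, x, y))) differentiable at t"
    "((\<lambda>(a, b, c). f a b c) \<circ> (\<lambda>s. (t, s, y))) differentiable at x"
    "((\<lambda>(a, b, c). f a b c) \<circ> (\<lambda>s. (t, x, s))) differentiable at y"
    by (rule differentiable_chain_at; auto intro!: derivative_intros smooth3_differentiable[OF assms])+
  then show "((\<lambda>s. f s x y) has_real_derivative pd_t f t x y) (at t)"
    and "((\<lambda>s. f t s y) has_real_derivative pd_x f t x y) (at x)"
    and "((\<lambda>s. f t x s) has_real_derivative pd_y f t x y) (at y)"
    unfolding pd_t_def pd_x_def pd_y_def
    by (simp_all add: o_def DERIV_deriv_iff_real_differentiable)
qed

lemma smooth3_isCont_slices:
  assumes "smooth3 f"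
  shows "isCont (\<lambda>p. f (fst p) (snd p) y) (t, x)"
    and "isCont (\<lambda>p. f (fst p) x (snd p)) (t, y)"
    and "isCont (\<lambda>p. f t (fst p) (snd p)) (x, y)"
proof -
  have c: "isCont (\<lambda>(a, b, c). f a b c) (t, x, y)"
    using differentiable_imp_continuous_within[OF smooth3_differentiable[OF assms]] by blast
  have "isCont ((\<lambda>(a, b, c). f a b c) \<circ> (\<lambda>p. (fst p, snd p, y))) (t, x)"
    "isCont ((\<lambda>(a, b, c). f a b c) \<circ> (\<lambda>p. (fst p, x, snd p))) (t, y)"
    "isCont ((\<lambda>(a, b, c). f a b c) \<circ> (\<lambda>p. (t, fst p, snd p))) (x, y)"
    by (rule continuous_at_compose; use c in \<open>auto intro!: continuous_intros\<close>)+
  then show "isCont (\<lambda>p. f (fst p) (snd p) y) (t, x)"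
    and "isCont (\<lambda>p. f (fst p) x (snd p)) (t, y)"
    and "isCont (\<lambda>p. f t (fst p) (snd p)) (x, y)"
    by (simp_all add: o_def split_def)
qed

lemma smooth3_pd_commute:
  assumes "smooth3 f"
  shows "pd_x (pd_t f) t x y = pd_t (pd_x f) t x y"
    and "pd_y (pd_t f) t x y = pd_t (pd_y f) t x y"
    and "pd_y (pd_x f) t x y = pd_x (pd_y f) t x y"
  using assms smooth3_pd[OF assms] smooth3_pd[OF smooth3_pd(1)[OF assms]]
    smooth3_pd[OF smooth3_pd(2)[OF assms]] smooth3_pd[OF smooth3_pd(3)[OF assms]]
  by (intro mixed_partials_commute[of "\<lambda>u v. f u v y" "\<lambda>u v. pd_t f u v y" "\<lambda>u v. pd_x f u v y"
        "\<lambda>u v. pd_x (pd_t f) u v y" "\<lambda>u v. pd_t (pd_x f) u v y" t x]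
      mixed_partials_commute[of "\<lambda>u v. f u x v" "\<lambda>u v. pd_t f u x v" "\<lambda>u v. pd_y f u x v"
        "\<lambda>u v. pd_y (pd_t f) u x v" "\<lambda>u v. pd_t (pd_y f) u x v" t y]
      mixed_partials_commute[of "\<lambda>u v. f t u v" "\<lambda>u v. pd_x f t u v" "\<lambda>u v. pd_y f t u v"
        "\<lambda>u v. pd_y (pd_x f) t u v" "\<lambda>u v. pd_x (pd_y f) t u v" x y];
      auto intro: smooth3_has_real_derivative_pd smooth3_isCont_slices)+

lemma DERIV_lincomb_eq:
  fixes P Q R G :: "real \<Rightarrow> real"
  assumes "\<And>s. a * P s + b * Q s + c * R s = d * G s"
    and "(P has_real_derivative P') (at t)" "(Q has_real_derivative Q') (at t)"
    and "(R has_real_derivative R') (at t)" "(G has_real_derivative G') (at t)"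
  shows "a * P' + b * Q' + c * R' = d * G'"
proof -
  have "((\<lambda>s. a * P s + b * Q s + c * R s) has_real_derivative a * P' + b * Q' + c * R') (at t)"
    using assms(2-4) by (intro DERIV_add DERIV_cmult)
  moreover have "((\<lambda>s. a * P s + b * Q s + c * R s) has_real_derivative d * G') (at t)"
    using DERIV_cmult[OF assms(5), of d] by (simp add: assms(1))
  ultimately show ?thesis by (rule DERIV_unique)
qed

lemma smooth3_pd_lincomb:
  assumes "smooth3 f1" "smooth3 f2" "smooth3 f3" "smooth3 g"
    and eq: "\<And>t x y. a * f1 t x y + b * f2 t x y + c * f3 t x y = d * g t x y"
  shows "a * pd_t f1 t x y + b * pd_t f2 t x y + c * pd_t f3 t x y = d * pd_t g t x y"
    and "a * pd_x f1 t x y + b * pd_x f2 t x y + c * pd_x f3 t x y = d * pd_x g t x y"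
    and "a * pd_y f1 t x y + b * pd_y f2 t x y + c * pd_y f3 t x y = d * pd_y g t x y"
proof -
  note f1 = smooth3_has_real_derivative_pd[OF assms(1)]
    and f2 = smooth3_has_real_derivative_pd[OF assms(2)]
    and f3 = smooth3_has_real_derivative_pd[OF assms(3)]
    and g = smooth3_has_real_derivative_pd[OF assms(4)]
  show "a * pd_t f1 t x y + b * pd_t f2 t x y + c * pd_t f3 t x y = d * pd_t g t x y"
    by (rule DERIV_lincomb_eq[OF eq f1(1) f2(1) f3(1) g(1)])
  show "a * pd_x f1 t x y + b * pd_x f2 t x y + c * pd_x f3 t x y = d * pd_x g t x y"
    by (rule DERIV_lincomb_eq[OF eq f1(2) f2(2) f3(2) g(2)])
  show "a * pd_y f1 t x y + b * pd_y f2 t x y + c * pd_y f3 t x y = d * pd_y g t x y"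
    by (rule DERIV_lincomb_eq[OF eq f1(3) f2(3) f3(3) g(3)])
qed

lemma pd_chain_rule:
  assumes "smooth3 \<phi>" and F: "\<And>t x y. F t x y = W (\<phi> t x y)"
    and W: "\<And>z. (W has_real_derivative W' z) (at z)"
  shows "pd_t F t x y = W' (\<phi> t x y) * pd_t \<phi> t x y"
    and "pd_x F t x y = W' (\<phi> t x y) * pd_x \<phi> t x y"
    and "pd_y F t x y = W' (\<phi> t x y) * pd_y \<phi> t x y"
proof -
  have "F = (\<lambda>t x y. W (\<phi> t x y))" using F by blast
  then show "pd_t F t x y = W' (\<phi> t x y) * pd_t \<phi> t x y"
    and "pd_x F t x y = W' (\<phi> t x y) * pd_x \<phi> t x y"
    and "pd_y F t x y = W' (\<phi> t x y) * pd_y \<phi> t x y"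
    unfolding pd_t_def pd_x_def pd_y_def
    by (auto intro!: DERIV_imp_deriv DERIV_chain2[OF W]
        smooth3_has_real_derivative_pd[OF assms(1), unfolded pd_t_def pd_x_def pd_y_def])
qed

text \<open>The two rows of \<open>adj M\<close> applied to the constraints: \<open>c \<box>\<phi>\<close> is \<open>\<partial>\<^sub>t - \<partial>\<^sub>x\<close> of the first
  constraint minus \<open>\<partial>\<^sub>y\<close> of the second, and \<open>s \<box>\<phi>\<close> is \<open>\<partial>\<^sub>t + \<partial>\<^sub>x\<close> of the second minus \<open>\<partial>\<^sub>y\<close>
  of the first.\<close>
lemma wave_box_adjugate:
  assumes \<phi>: "smooth3 \<phi>" and "smooth3 F"
    and E1: "\<And>t x y. c * pd_t \<phi> t x y + c * pd_x \<phi> t x y + s * pd_y \<phi> t x y = s * F t x y"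
    and E2: "\<And>t x y. s * pd_t \<phi> t x y - s * pd_x \<phi> t x y + c * pd_y \<phi> t x y = - c * F t x y"
  shows "c * wave_box \<phi> t x y = s * pd_t F t x y - s * pd_x F t x y + c * pd_y F t x y"
    and "s * wave_box \<phi> t x y = - (c * pd_t F t x y + c * pd_x F t x y + s * pd_y F t x y)"
proof -
  have E2': "s * pd_t \<phi> t x y + (- s) * pd_x \<phi> t x y + c * pd_y \<phi> t x y = (- c) * F t x y"
    for t x y using E2[of t x y] by simp
  note e1 = smooth3_pd_lincomb[OF smooth3_pd[OF \<phi>] \<open>smooth3 F\<close> E1, of t x y]
  note e2 = smooth3_pd_lincomb[OF smooth3_pd[OF \<phi>] \<open>smooth3 F\<close> E2', of t x y]
  note mixed = smooth3_pd_commute[OF \<phi>, of t x y]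
  show "c * wave_box \<phi> t x y = s * pd_t F t x y - s * pd_x F t x y + c * pd_y F t x y"
    using e1(1) e1(2) e2(3) mixed unfolding wave_box_def by (simp add: algebra_simps)
  show "s * wave_box \<phi> t x y = - (c * pd_t F t x y + c * pd_x F t x y + s * pd_y F t x y)"
    using e2(1) e2(2) e1(3) mixed unfolding wave_box_def by (simp add: algebra_simps)
qed

lemma wave_box_first_order_system:
  assumes \<phi>: "smooth3 \<phi>" and "smooth3 F"
    and E1: "\<And>t x y. cos \<alpha> * pd_t \<phi> t x y + cos \<alpha> * pd_x \<phi> t x y + sin \<alpha> * pd_y \<phi> t x y
                       = sin \<alpha> * F t x y"
    and E2: "\<And>t x y. sin \<alpha> * pd_t \<phi> t x y - sin \<alpha> * pd_x \<phi> t x y + cos \<alpha> * pd_y \<phi> t x y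
                       = - cos \<alpha> * F t x y"
    and F: "\<And>t x y. F t x y = W (\<phi> t x y)"
    and W: "\<And>z. (W has_real_derivative W' z) (at z)"
  shows "wave_box \<phi> t x y = - W' (\<phi> t x y) * F t x y"
proof -
  note adj = wave_box_adjugate[OF \<phi> \<open>smooth3 F\<close> E1 E2, of t x y]
  note chain = pd_chain_rule[OF \<phi> F W, of t x y]
  have "cos \<alpha> * wave_box \<phi> t x y
      = W' (\<phi> t x y) * (sin \<alpha> * pd_t \<phi> t x y - sin \<alpha> * pd_x \<phi> t x y + cos \<alpha> * pd_y \<phi> t x y)"
    unfolding adj chain by (simp add: algebra_simps)
  also have "\<dots> = cos \<alpha> * (- W' (\<phi> t x y) * F t x y)" unfolding E2 by simp
  finally have c: "cos \<alpha> * wave_box \<phi> t x y = cos \<alpha> * (- W' (\<phi> t x y) * F t x y)" .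
  have "sin \<alpha> * wave_box \<phi> t x y
      = - W' (\<phi> t x y) * (cos \<alpha> * pd_t \<phi> t x y + cos \<alpha> * pd_x \<phi> t x y + sin \<alpha> * pd_y \<phi> t x y)"
    unfolding adj chain by (simp add: algebra_simps)
  also have "\<dots> = sin \<alpha> * (- W' (\<phi> t x y) * F t x y)" unfolding E1 by simp
  finally have s: "sin \<alpha> * wave_box \<phi> t x y = sin \<alpha> * (- W' (\<phi> t x y) * F t x y)" .
  have "wave_box \<phi> t x y = ((cos \<alpha>)\<^sup>2 + (sin \<alpha>)\<^sup>2) * wave_box \<phi> t x y" by simp
  also have "\<dots> = cos \<alpha> * (cos \<alpha> * wave_box \<phi> t x y) + sin \<alpha> * (sin \<alpha> * wave_box \<phi> t x y)"
    by (simp only: power2_eq_square ring_distribs mult.assoc)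
  also have "\<dots> = ((cos \<alpha>)\<^sup>2 + (sin \<alpha>)\<^sup>2) * (- W' (\<phi> t x y) * F t x y)"
    unfolding c s by (simp only: power2_eq_square ring_distribs mult.assoc)
  also have "\<dots> = - W' (\<phi> t x y) * F t x y" by simp
  finally show ?thesis .
qed

theorem mainTheorem1:
  fixes h :: "real \<Rightarrow> real" and \<alpha> :: real
    and \<phi> F :: "real \<Rightarrow> real \<Rightarrow> real \<Rightarrow> real"
  assumes "smooth1 h" and "smooth3 \<phi>" and "smooth3 F"
    and "\<And>t x y. cos \<alpha> * pd_t \<phi> t x y + cos \<alpha> * pd_x \<phi> t x y + sin \<alpha> * pd_y \<phi> t x y
                   = sin \<alpha> * F t x y"
    and "\<And>t x y. sin \<alpha> * pd_t \<phi> t x y - sin \<alpha> * pd_x \<phi> t x y + cos \<alpha> * pd_y \<phi> t x y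
                   = - cos \<alpha> * F t x y"
    and "\<And>t x y. F t x y + deriv h (\<phi> t x y) = 0"
  shows "EL_system h \<phi> (\<lambda>t x y. 0) (\<lambda>t x y. 0) F
    \<and> (\<forall>t x y. wave_box \<phi> t x y + deriv (deriv h) (\<phi> t x y) * deriv h (\<phi> t x y) = 0)"
proof -
  have F: "F t x y = - deriv h (\<phi> t x y)" for t x y using assms(6)[of t x y] by simp
  have "(deriv h has_real_derivative deriv (deriv h) z) (at z)" for z
    using assms(1) by (auto elim: smooth1.cases simp: DERIV_deriv_iff_real_differentiable)
  then have W: "((\<lambda>z. - deriv h z) has_real_derivative - deriv (deriv h) z) (at z)" for z
    by (rule DERIV_minus)
  have wave: "wave_box \<phi> t x y + deriv (deriv h) (\<phi> t x y) * deriv h (\<phi> t x y) = 0" for t x y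
    using wave_box_first_order_system[OF assms(2-5) F W, of t x y] F[of t x y] by simp
  show ?thesis
    unfolding EL_system_def Dop1_def Dop2_def pd_t_def pd_x_def pd_y_def
    using wave assms(6) by simp
qed

end
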